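(* Let $F=\{T_1,\dots,T_n\}$ be a finite family of reduction operators relative to a well-ordered set $(G,<)$ and let $2\le i\le n$. Identifying $\mathrm{syz}(T_1,\dots,T_{i-1})$ with its image under $\iota_i:(v_1,\dots,v_{i-1})\mapsto(v_1,\dots,v_{i-1},0)$, we have the direct sum decomposition \[\mathrm{syz}(T_1,\dots,T_i)=\mathrm{im}(\iota_i)\oplus\mathbb{K}\{s_{i,g_0}\mid g_0\in\mathrm{red}(U_{i-1}\vee T_i)\},\] where $s_{i,g_0}$ is viewed in $\ker T_1\times\dots\times\ker T_i$.
   Context: Let $\mathbb{K}$ be a field, $(G,<)$ a well-ordered set and $\mathbb{K}G$ the vector space with basis $G$. For $v\neq 0$, $\mathrm{lt}(v)$ is the greatest element of $G$ appearing with nonzero coefficient in $v$. Extend $<$ to $\mathbb{K}G$: $u<v$ if $u=0$ and $v\neq0$, or if $\mathrm{lt}(u)<\mathrm{lt}(v)$; $u\le v$ means $u<v$ or $u=v$. A reduction operator is an idempotent linear endomorphism $T$ of $\mathbb{K}G$ with $T(g)\le g$ for all $g\in G$; $\mathrm{red}(T)=\{g\in G\mid T(g)\neq g\}$. The elements $g-T(g)$, $g\in\mathrm{red}(T)$, form a basis of $\ker T$; the expression of $v\in\ker T$ in this basis is its $T$-decomposition. For every subspace $V$ there is a unique reduction operator $\ker^{-1}(V)$ with kernel $V$; $T\wedge T'=\ker^{-1}(\ker T+\ker T')$, $T\vee T'=\ker^{-1}(\ker T\cap\ker T')$, and $T_1\wedge\dots\wedge T_k=\ker^{-1}(\sum\ker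 T_j)$. For a finite family $F'=\{T_1,\dots,T_k\}$: $\mathbf{ker}(F')=\ker T_1\times\dots\times\ker T_k$; $\pi_{F'}(v_1,\dots,v_k)=v_1+\dots+v_k$; $\mathrm{syz}(F')=\mathrm{syz}(T_1,\dots,T_k)=\ker\pi_{F'}$. For $g\in\mathrm{red}(T_j)$, $e_{j,g}$ is the tuple with $g-T_j(g)$ at position $j$ and $0$ elsewhere; these form a basis of $\mathbf{ker}(F')$, well-ordered by $e_{j,g}\sqsubset e_{j',g'}$ iff $j<j'$, or $j=j'$ and $g<g'$. The leading term of a nonzero element is the $\sqsubset$-greatest $e_{j,g}$ in its expansion; $\mathrm{lt}(\mathrm{syz}(F'))$ is the set of leading terms of nonzero syzygies. Every $v\in\ker(T_1\wedge\dots\wedge T_k)$ has a unique expression $v=\sum\lambda_{j,g}(g-T_j(g))$ over pairs with $g\in\mathrm{red}(T_j)$ and $e_{j,g}\notin\mathrm{lt}(\mathrm{syz}(F'))$: its canonical decomposition with respect to $F'$. $U_{i-1}=T_1\wedge\dots\wedge T_{i-1}$. For $g_0\in\mathrm{red}(U_{i-1}\vee T_i)$, $v_{i,g_0}=g_0-(U_{i-1}\vee T_i)(g_0)\in\ker U_{i-1}\cap\ker T_i$. With $\sum_{j,g'}\lambda_{j,g'}(g'-T_j(g'))$ its canonical decomposition with respect to $\{T_1,\dots,T_{i-1}\}$ and $\sum_g\lambda_g(g-T_i(g))$ its $T_i$-decomposition, $s_{i,g_0}=\sum_g\lambda_g e_{i,g}-\sum_{j,g'}\lambda_{j,g'}e_{j,g'}$.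 *)

theory Defs
  imports Main "HOL-Library.Function_Algebras"
begin

text \<open>Vectors of KG are finitely supported functions G => K; tuples of vectors
  are functions nat => (G => K), position j being the j-th component (1-based).\<close>

definition delta :: "'g \<Rightarrow> 'g \<Rightarrow> 'k::zero_neq_one" where
  "delta g = (\<lambda>h. if h = g then 1 else 0)"

definition supp :: "('g \<Rightarrow> 'k::zero) \<Rightarrow> 'g set" where
  "supp v = {g. v g \<noteq> 0}"

definition KG :: "('g \<Rightarrow> 'k::zero) set" where
  "KG = {v. finite (supp v)}"

definition smult :: "'k::times \<Rightarrow> ('g \<Rightarrow> 'k) \<Rightarrow> 'g \<Rightarrow> 'k" where
  "smult c v = (\<lambda>g. c * v g)"

definition lt :: "('g::wellorder \<Rightarrow> 'k::zero) \<Rightarrow> 'g" where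
  "lt v = Max (supp v)"

definition vless :: "('g::wellorder \<Rightarrow> 'k::zero) \<Rightarrow> ('g \<Rightarrow> 'k) \<Rightarrow> bool" where
  "vless u v \<longleftrightarrow> (u = 0 \<and> v \<noteq> 0) \<or> (u \<noteq> 0 \<and> v \<noteq> 0 \<and> lt u < lt v)"

definition vle :: "('g::wellorder \<Rightarrow> 'k::zero) \<Rightarrow> ('g \<Rightarrow> 'k) \<Rightarrow> bool" where
  "vle u v \<longleftrightarrow> vless u v \<or> u = v"

text \<open>Reduction operator: idempotent linear endomorphism of KG with T(g) <= g.
  Only its values on KG matter.\<close>
definition is_redop :: "(('g::wellorder \<Rightarrow> 'k::field) \<Rightarrow> ('g \<Rightarrow> 'k)) \<Rightarrow> bool" where
  "is_redop T \<longleftrightarrow>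
     (\<forall>v\<in>KG. T v \<in> KG) \<and>
     (\<forall>u\<in>KG. \<forall>v\<in>KG. T (u + v) = T u + T v) \<and>
     (\<forall>c. \<forall>v\<in>KG. T (smult c v) = smult c (T v)) \<and>
     (\<forall>v\<in>KG. T (T v) = T v) \<and>
     (\<forall>g. vle (T (delta g)) (delta g))"

definition kerop :: "(('g \<Rightarrow> 'k::field) \<Rightarrow> ('g \<Rightarrow> 'k)) \<Rightarrow> ('g \<Rightarrow> 'k) set" where
  "kerop T = {v \<in> KG. T v = 0}"

definition red :: "(('g \<Rightarrow> 'k::field) \<Rightarrow> ('g \<Rightarrow> 'k)) \<Rightarrow> 'g set" where
  "red T = {g. T (delta g) \<noteq> delta g}"

text \<open>Value at the basis element g of the unique reduction operator with kernel K,
  i.e. ker^{-1}(K)(g), and red(ker^{-1}(K)).\<close>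
definition kerinv_at :: "('g::wellorder \<Rightarrow> 'k::field) set \<Rightarrow> 'g \<Rightarrow> ('g \<Rightarrow> 'k)" where
  "kerinv_at K g = (THE w. \<exists>T. is_redop T \<and> kerop T = K \<and> w = T (delta g))"

definition kerinv_red :: "('g::wellorder \<Rightarrow> 'k::field) set \<Rightarrow> 'g set" where
  "kerinv_red K = {g. kerinv_at K g \<noteq> delta g}"

text \<open>ker T_1 + ... + ker T_k  (= ker (T_1 \<and> ... \<and> T_k)).\<close>
definition kersum :: "(nat \<Rightarrow> ('g \<Rightarrow> 'k::field) \<Rightarrow> ('g \<Rightarrow> 'k)) \<Rightarrow> nat \<Rightarrow> ('g \<Rightarrow> 'k) set" where
  "kersum Ts k = {(\<Sum>j\<in>{1..k}. w j) | w. \<forall>j\<in>{1..k}. w j \<in> kerop (Ts j)}"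

definition kertuples :: "(nat \<Rightarrow> ('g \<Rightarrow> 'k::field) \<Rightarrow> ('g \<Rightarrow> 'k)) \<Rightarrow> nat \<Rightarrow> (nat \<Rightarrow> 'g \<Rightarrow> 'k) set" where
  "kertuples Ts k = {w. (\<forall>j\<in>{1..k}. w j \<in> kerop (Ts j)) \<and> (\<forall>j. j \<notin> {1..k} \<longrightarrow> w j = 0)}"

definition syz :: "(nat \<Rightarrow> ('g \<Rightarrow> 'k::field) \<Rightarrow> ('g \<Rightarrow> 'k)) \<Rightarrow> nat \<Rightarrow> (nat \<Rightarrow> 'g \<Rightarrow> 'k) set" where
  "syz Ts k = {w \<in> kertuples Ts k. (\<Sum>j\<in>{1..k}. w j) = 0}"

definition tsmult :: "'k::times \<Rightarrow> (nat \<Rightarrow> 'g \<Rightarrow> 'k) \<Rightarrow> nat \<Rightarrow> 'g \<Rightarrow> 'k" where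
  "tsmult c w = (\<lambda>j. smult c (w j))"

definition ebas :: "(nat \<Rightarrow> ('g \<Rightarrow> 'k::field) \<Rightarrow> ('g \<Rightarrow> 'k)) \<Rightarrow> nat \<Rightarrow> 'g \<Rightarrow> (nat \<Rightarrow> 'g \<Rightarrow> 'k)" where
  "ebas Ts j g = (\<lambda>j'. if j' = j then delta g - Ts j (delta g) else 0)"

definition combo :: "(nat \<Rightarrow> ('g \<Rightarrow> 'k::field) \<Rightarrow> ('g \<Rightarrow> 'k)) \<Rightarrow> (nat \<times> 'g \<Rightarrow> 'k) \<Rightarrow> (nat \<Rightarrow> 'g \<Rightarrow> 'k)" where
  "combo Ts c = (\<Sum>p\<in>{p. c p \<noteq> 0}. tsmult (c p) (ebas Ts (fst p) (snd p)))"

definition valid_coeffs :: "(nat \<Rightarrow> ('g \<Rightarrow> 'k::field) \<Rightarrow> ('g \<Rightarrow> 'k)) \<Rightarrow> nat \<Rightarrow> (nat \<times> 'g \<Rightarrow> 'k) \<Rightarrow> bool" where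
  "valid_coeffs Ts k c \<longleftrightarrow> finite {p. c p \<noteq> 0} \<and>
     (\<forall>p. c p \<noteq> 0 \<longrightarrow> fst p \<in> {1..k} \<and> snd p \<in> red (Ts (fst p)))"

definition coeffs :: "(nat \<Rightarrow> ('g \<Rightarrow> 'k::field) \<Rightarrow> ('g \<Rightarrow> 'k)) \<Rightarrow> nat \<Rightarrow> (nat \<Rightarrow> 'g \<Rightarrow> 'k) \<Rightarrow> (nat \<times> 'g \<Rightarrow> 'k)" where
  "coeffs Ts k w = (THE c. valid_coeffs Ts k c \<and> combo Ts c = w)"

definition pless :: "nat \<times> 'g::wellorder \<Rightarrow> nat \<times> 'g \<Rightarrow> bool" where
  "pless p q \<longleftrightarrow> fst p < fst q \<or> (fst p = fst q \<and> snd p < snd q)"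

definition is_lead :: "(nat \<times> 'g::wellorder \<Rightarrow> 'k::zero) \<Rightarrow> nat \<times> 'g \<Rightarrow> bool" where
  "is_lead c p \<longleftrightarrow> c p \<noteq> 0 \<and> (\<forall>q. c q \<noteq> 0 \<longrightarrow> q = p \<or> pless q p)"

definition ltsyz :: "(nat \<Rightarrow> ('g::wellorder \<Rightarrow> 'k::field) \<Rightarrow> ('g \<Rightarrow> 'k)) \<Rightarrow> nat \<Rightarrow> (nat \<times> 'g) set" where
  "ltsyz Ts k = {p. \<exists>w\<in>syz Ts k. w \<noteq> 0 \<and> is_lead (coeffs Ts k w) p}"

definition candec :: "(nat \<Rightarrow> ('g::wellorder \<Rightarrow> 'k::field) \<Rightarrow> ('g \<Rightarrow> 'k)) \<Rightarrow> nat \<Rightarrow> ('g \<Rightarrow> 'k) \<Rightarrow> (nat \<times> 'g \<Rightarrow> 'k)" where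
  "candec Ts k v = (THE c. valid_coeffs Ts k c \<and> (\<forall>p. c p \<noteq> 0 \<longrightarrow> p \<notin> ltsyz Ts k) \<and>
      v = (\<Sum>p\<in>{p. c p \<noteq> 0}. smult (c p) (delta (snd p) - Ts (fst p) (delta (snd p)))))"

definition tdec :: "(('g \<Rightarrow> 'k::field) \<Rightarrow> ('g \<Rightarrow> 'k)) \<Rightarrow> ('g \<Rightarrow> 'k) \<Rightarrow> ('g \<Rightarrow> 'k)" where
  "tdec T v = (THE l. finite {g. l g \<noteq> 0} \<and> (\<forall>g. l g \<noteq> 0 \<longrightarrow> g \<in> red T) \<and>
      v = (\<Sum>g\<in>{g. l g \<noteq> 0}. smult (l g) (delta g - T (delta g))))"

text \<open>ker(U_{i-1}) \<inter> ker T_i, the kernel of U_{i-1} \<or> T_i.\<close>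
definition joinker :: "(nat \<Rightarrow> ('g::wellorder \<Rightarrow> 'k::field) \<Rightarrow> ('g \<Rightarrow> 'k)) \<Rightarrow> nat \<Rightarrow> ('g \<Rightarrow> 'k) set" where
  "joinker Ts i = kersum Ts (i - 1) \<inter> kerop (Ts i)"

definition vvec :: "(nat \<Rightarrow> ('g::wellorder \<Rightarrow> 'k::field) \<Rightarrow> ('g \<Rightarrow> 'k)) \<Rightarrow> nat \<Rightarrow> 'g \<Rightarrow> ('g \<Rightarrow> 'k)" where
  "vvec Ts i g0 = delta g0 - kerinv_at (joinker Ts i) g0"

definition svec :: "(nat \<Rightarrow> ('g::wellorder \<Rightarrow> 'k::field) \<Rightarrow> ('g \<Rightarrow> 'k)) \<Rightarrow> nat \<Rightarrow> 'g \<Rightarrow> (nat \<Rightarrow> 'g \<Rightarrow> 'k)" where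
  "svec Ts i g0 =
     (let v = vvec Ts i g0; l = tdec (Ts i) v; m = candec Ts (i - 1) v
      in combo Ts (\<lambda>p. if fst p = i then l (snd p) else - m p))"

definition tspan :: "(nat \<Rightarrow> 'g \<Rightarrow> 'k::field) set \<Rightarrow> (nat \<Rightarrow> 'g \<Rightarrow> 'k) set" where
  "tspan S = {(\<Sum>x\<in>A. tsmult (c x) x) | A c. finite A \<and> A \<subseteq> S}"

end

theory Submission
  imports Defs "HOL-Library.Product_Lexorder"
begin

text \<open>The last component v_i of a syzygy (v_1, ..., v_i) equals -(v_1 + ... + v_{i-1}), so it lies
  in ker U_{i-1} \<inter> ker T_i, the kernel of U = U_{i-1} \<or> T_i, whose basis is g_0 - U(g_0),
  g_0 in red(U). Each s_{i,g_0} is a syzygy with last component exactly g_0 - U(g_0) (its first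
  i - 1 components come from the canonical decomposition of that vector). Subtracting from a
  syzygy the combination of the s_{i,g_0} with the same last component leaves a syzygy of
  T_1, ..., T_{i-1}; conversely the coefficients of a combination of the s_{i,g_0} are read off its
  last component by triangularity, so the sum is direct. That ker^{-1}(V) and the canonical
  decompositions are well defined comes from normal forms modulo V and from cancelling leading
  terms of syzygies.\<close>

section \<open>Finitely supported vectors\<close>

lemma sum_fun_apply: "(\<Sum>a\<in>A. f a) x = (\<Sum>a\<in>A. f a x)"
  by (induction A rule: infinite_finite_induct) auto

lemma const_zero_fun [simp]: "(\<lambda>_. 0) = (0 :: 'a \<Rightarrow> 'b::zero)"
  by (simp add: zero_fun_def)

lemma smult_apply [simp]: "smult c v g = c * v g"
  by (simp add: smult_def)

lemma smult_0_left [simp]: "smult 0 v = (0 :: 'g \<Rightarrow> 'k::mult_zero)"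
  by (rule ext) simp

lemma smult_0_right [simp]: "smult c 0 = (0 :: 'g \<Rightarrow> 'k::mult_zero)"
  by (rule ext) simp

lemma smult_minus_one: "smult (-1) v = - (v :: 'g \<Rightarrow> 'k::ring_1)"
  by (rule ext) simp

lemma smult_diff_right: "smult c (u - v) = smult c u - smult c (v :: 'g \<Rightarrow> 'k::ring)"
  by (rule ext) (simp add: algebra_simps)

lemma smult_sum_right: "smult c (sum f A) = (\<Sum>a\<in>A. smult c (f a :: 'g \<Rightarrow> 'k::comm_ring))"
  by (rule ext) (simp add: sum_fun_apply sum_distrib_left)

lemma tsmult_apply [simp]: "tsmult c w j = smult c (w j)"
  by (simp add: tsmult_def)

lemma delta_apply: "delta g h = (if h = g then 1 else 0)"
  by (simp add: delta_def)

lemma delta_nonzero [simp]: "(delta g :: 'g \<Rightarrow> 'k::zero_neq_one) \<noteq> 0"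
  by (auto simp: delta_def fun_eq_iff)

lemma supp_delta [simp]: "supp (delta g :: 'g \<Rightarrow> 'k::zero_neq_one) = {g}"
  by (auto simp: supp_def delta_def)

lemma lt_delta [simp]: "lt (delta g :: 'g::wellorder \<Rightarrow> 'k::zero_neq_one) = g"
  by (simp add: lt_def)

lemma KG_iff: "v \<in> KG \<longleftrightarrow> finite (supp v)"
  by (simp add: KG_def)

lemma delta_in_KG [simp]: "(delta g :: 'g \<Rightarrow> 'k::zero_neq_one) \<in> KG"
  by (simp add: KG_iff)

lemma zero_in_KG [simp]: "(0 :: 'g \<Rightarrow> 'k::zero) \<in> KG"
  by (simp add: KG_iff supp_def)

lemma KG_add: "u \<in> KG \<Longrightarrow> v \<in> KG \<Longrightarrow> (u + v :: 'g \<Rightarrow> 'k::monoid_add) \<in> KG"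
  unfolding KG_iff by (rule finite_subset[of _ "supp u \<union> supp v"]) (auto simp: supp_def)

lemma KG_diff: "u \<in> KG \<Longrightarrow> v \<in> KG \<Longrightarrow> (u - v :: 'g \<Rightarrow> 'k::group_add) \<in> KG"
  unfolding KG_iff by (rule finite_subset[of _ "supp u \<union> supp v"]) (auto simp: supp_def)

lemma KG_uminus: "v \<in> KG \<Longrightarrow> (- v :: 'g \<Rightarrow> 'k::group_add) \<in> KG"
  unfolding KG_iff by (rule finite_subset[of _ "supp v"]) (auto simp: supp_def)

lemma KG_smult: "v \<in> KG \<Longrightarrow> (smult c v :: 'g \<Rightarrow> 'k::mult_zero) \<in> KG"
  unfolding KG_iff by (rule finite_subset[of _ "supp v"]) (auto simp: supp_def)

lemma KG_sum: "(\<And>a. a \<in> A \<Longrightarrow> f a \<in> KG) \<Longrightarrow> (sum f A :: 'g \<Rightarrow> 'k::comm_monoid_add) \<in> KG"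
  by (induction A rule: infinite_finite_induct) (auto intro: KG_add)

lemma KG_expansion: "v \<in> KG \<Longrightarrow> (\<Sum>h\<in>supp v. smult (v h) (delta h)) = (v :: 'g \<Rightarrow> 'k::comm_ring_1)"
proof (rule ext)
  fix g assume "v \<in> KG"
  have "(\<Sum>h\<in>supp v. smult (v h) (delta h)) g = (\<Sum>h\<in>supp v. if g = h then v h else 0)"
    by (auto simp: sum_fun_apply delta_apply intro!: sum.cong)
  also have "\<dots> = v g"
    using \<open>v \<in> KG\<close> by (simp add: KG_iff supp_def)
  finally show "(\<Sum>h\<in>supp v. smult (v h) (delta h)) g = v g" .
qed

lemma le_lt_if_nonzero: "v \<in> KG \<Longrightarrow> v h \<noteq> 0 \<Longrightarrow> h \<le> lt v"
  unfolding lt_def KG_iff by (rule Max_ge) (auto simp: supp_def)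

lemma lt_nonzero: "v \<in> KG \<Longrightarrow> v \<noteq> 0 \<Longrightarrow> v (lt v) \<noteq> 0"
proof -
  assume "v \<in> KG" "v \<noteq> 0"
  then have "supp v \<noteq> {}" "finite (supp v)"
    by (auto simp: supp_def KG_iff fun_eq_iff)
  then have "Max (supp v) \<in> supp v"
    by (rule Max_in[rotated])
  then show ?thesis
    by (simp add: lt_def supp_def)
qed

section \<open>Reduction operators\<close>

lemma redop_in_KG: "is_redop T \<Longrightarrow> v \<in> KG \<Longrightarrow> T v \<in> KG"
  by (simp add: is_redop_def)

lemma redop_add: "is_redop T \<Longrightarrow> u \<in> KG \<Longrightarrow> v \<in> KG \<Longrightarrow> T (u + v) = T u + T v"
  by (simp add: is_redop_def)

lemma redop_smult: "is_redop T \<Longrightarrow> v \<in> KG \<Longrightarrow> T (smult c v) = smult c (T v)"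
  by (simp add: is_redop_def)

lemma redop_idem: "is_redop T \<Longrightarrow> v \<in> KG \<Longrightarrow> T (T v) = T v"
  by (simp add: is_redop_def)

lemma redop_vle: "is_redop T \<Longrightarrow> vle (T (delta g)) (delta g)"
  by (simp add: is_redop_def)

lemma redop_zero: "is_redop T \<Longrightarrow> T 0 = 0"
  using redop_add[of T 0 0] by simp

lemma redop_uminus: "is_redop T \<Longrightarrow> v \<in> KG \<Longrightarrow> T (- v) = - T v"
  using redop_smult[of T v "-1"] by (simp add: smult_minus_one)

lemma redop_diff: "is_redop T \<Longrightarrow> u \<in> KG \<Longrightarrow> v \<in> KG \<Longrightarrow> T (u - v) = T u - T v"
  using redop_add[of T u "- v"] redop_uminus[of T v] by (simp add: KG_uminus)

lemma redop_sum:
  "is_redop T \<Longrightarrow> (\<And>a. a \<in> A \<Longrightarrow> f a \<in> KG) \<Longrightarrow> T (sum f A) = (\<Sum>a\<in>A. T (f a))"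
proof (induction A rule: infinite_finite_induct)
  case (insert x F)
  have "f x \<in> KG" "sum f F \<in> KG"
    using insert.prems by (auto intro: KG_sum)
  then show ?case
    using insert by (simp add: redop_add del: plus_fun_apply)
qed (auto simp: redop_zero)

lemma redop_expansion:
  assumes T: "is_redop T" and v: "v \<in> KG"
  shows "T v = (\<Sum>h\<in>supp v. smult (v h) (T (delta h)))"
proof -
  have "T v = T (\<Sum>h\<in>supp v. smult (v h) (delta h))"
    using KG_expansion[OF v] by simp
  also have "\<dots> = (\<Sum>h\<in>supp v. smult (v h) (T (delta h)))"
    by (simp add: redop_sum[OF T] redop_smult[OF T] KG_smult)
  finally show ?thesis .
qed

definition kbasis :: "(('g \<Rightarrow> 'k::field) \<Rightarrow> ('g \<Rightarrow> 'k)) \<Rightarrow> 'g \<Rightarrow> 'g \<Rightarrow> 'k" where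
  "kbasis T g = delta g - T (delta g)"

lemma diff_redop_expansion:
  assumes T: "is_redop T" and v: "v \<in> KG"
  shows "v - T v = (\<Sum>h\<in>supp v \<inter> red T. smult (v h) (kbasis T h))"
proof -
  have fin: "finite (supp v)"
    using v by (simp add: KG_iff)
  have "v - T v = (\<Sum>h\<in>supp v. smult (v h) (kbasis T h))"
    unfolding redop_expansion[OF T v]
    by (subst (1) KG_expansion[OF v, symmetric])
      (simp add: sum_subtractf[symmetric] kbasis_def smult_diff_right)
  also have "\<dots> = (\<Sum>h\<in>supp v. if h \<in> red T then smult (v h) (kbasis T h) else 0)"
    by (rule sum.cong) (auto simp: red_def kbasis_def)
  also have "\<dots> = (\<Sum>h\<in>supp v \<inter> red T. smult (v h) (kbasis T h))"
    by (simp add: sum.inter_restrict[OF fin])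
  finally show ?thesis .
qed

lemma redop_delta_vanishes:
  assumes T: "is_redop T"
  shows "k < h \<Longrightarrow> T (delta k) h = 0" and "k \<in> red T \<Longrightarrow> T (delta k) k = 0"
proof -
  let ?w = "T (delta k)"
  have w: "?w \<in> KG"
    by (rule redop_in_KG[OF T]) simp
  have "?w = delta k \<or> ?w = 0 \<or> (?w \<noteq> 0 \<and> lt ?w < k)"
    using redop_vle[OF T, of k] by (auto simp: vle_def vless_def)
  then show "k < h \<Longrightarrow> ?w h = 0" and "k \<in> red T \<Longrightarrow> ?w k = 0"
    using le_lt_if_nonzero[OF w, of h] le_lt_if_nonzero[OF w, of k]
    by (auto simp: delta_apply red_def)
qed

lemma kbasis_above: "is_redop T \<Longrightarrow> g < h \<Longrightarrow> kbasis T g h = 0"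
  by (simp add: kbasis_def redop_delta_vanishes delta_apply)

lemma kbasis_self: "is_redop T \<Longrightarrow> g \<in> red T \<Longrightarrow> kbasis T g g = 1"
  by (simp add: kbasis_def redop_delta_vanishes delta_apply)

lemma kbasis_in_KG: "is_redop T \<Longrightarrow> kbasis T g \<in> KG"
  by (simp add: kbasis_def KG_diff redop_in_KG)

lemma kbasis_in_kerop: "is_redop T \<Longrightarrow> kbasis T g \<in> kerop T"
  using kbasis_in_KG[of T g]
  by (simp add: kerop_def kbasis_def redop_diff redop_in_KG redop_idem)

lemma kbasis_comb_at_max:
  assumes T: "is_redop T" and S: "finite S" "S \<subseteq> red T" and m: "m \<in> S" "\<forall>g\<in>S. g \<le> m"
  shows "m < h \<Longrightarrow> (\<Sum>g\<in>S. smult (l g) (kbasis T g)) h = 0"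
    and "(\<Sum>g\<in>S. smult (l g) (kbasis T g)) m = l m"
proof -
  show "m < h \<Longrightarrow> (\<Sum>g\<in>S. smult (l g) (kbasis T g)) h = 0"
    using m(2) by (auto simp: sum_fun_apply kbasis_above[OF T] intro!: sum.neutral)
  have "(\<Sum>g\<in>S. smult (l g) (kbasis T g)) m = (\<Sum>g\<in>S. if g = m then l m else 0)"
    unfolding sum_fun_apply
  proof (rule sum.cong)
    fix g assume "g \<in> S"
    then have "g = m \<or> g < m"
      using m(2) by force
    then show "smult (l g) (kbasis T g) m = (if g = m then l m else 0)"
      using \<open>g \<in> S\<close> S(2) kbasis_self[OF T] kbasis_above[OF T, of g m] by auto
  qed simp
  then show "(\<Sum>g\<in>S. smult (l g) (kbasis T g)) m = l m"
    using S(1) m(1) by simp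
qed

text \<open>An element of the image of T is fixed by T, so its coefficients in the triangular family
  kbasis T g, g in red T, all vanish.\<close>
lemma redop_vanishes_on_red:
  assumes T: "is_redop T" and x: "x \<in> KG" and h: "h \<in> red T"
  shows "T x h = 0"
proof (rule ccontr)
  assume "T x h \<noteq> 0"
  let ?y = "T x"
  let ?S = "supp ?y \<inter> red T"
  have y: "?y \<in> KG"
    using redop_in_KG[OF T x] .
  have fin: "finite ?S"
    using y by (auto simp: KG_iff)
  have ne: "?S \<noteq> {}"
    using \<open>T x h \<noteq> 0\<close> h by (auto simp: supp_def)
  define m where "m = Max ?S"
  have m: "m \<in> ?S" "\<forall>g\<in>?S. g \<le> m"
    using Max_in[OF fin ne] fin by (auto simp: m_def)
  have "0 = (?y - T ?y) m"
    using redop_idem[OF T x] by simp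
  also have "\<dots> = ?y m"
    unfolding diff_redop_expansion[OF T y] using kbasis_comb_at_max(2)[OF T fin _ m] by simp
  finally show False
    using m(1) by (simp add: supp_def)
qed

lemma kbasis_on_red: "is_redop T \<Longrightarrow> h \<in> red T \<Longrightarrow> kbasis T g h = delta g h"
  by (simp add: kbasis_def redop_vanishes_on_red)

lemma kbasis_comb_on_red:
  assumes T: "is_redop T" and S: "finite S" and h: "h \<in> red T"
  shows "(\<Sum>g\<in>S. smult (l g) (kbasis T g)) h = (if h \<in> S then l h else 0)"
proof -
  have "(\<Sum>g\<in>S. smult (l g) (kbasis T g)) h = (\<Sum>g\<in>S. if h = g then l g else 0)"
    unfolding sum_fun_apply by (rule sum.cong) (auto simp: kbasis_on_red[OF T h] delta_apply)
  then show ?thesis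
    using S by simp
qed

lemma kerop_in_KG: "v \<in> kerop T \<Longrightarrow> v \<in> KG"
  by (simp add: kerop_def)

lemma kerop_zero: "is_redop T \<Longrightarrow> 0 \<in> kerop T"
  by (simp add: kerop_def redop_zero)

lemma kerop_add: "is_redop T \<Longrightarrow> u \<in> kerop T \<Longrightarrow> v \<in> kerop T \<Longrightarrow> u + v \<in> kerop T"
  by (simp add: kerop_def redop_add KG_add)

lemma kerop_smult: "is_redop T \<Longrightarrow> v \<in> kerop T \<Longrightarrow> smult c v \<in> kerop T"
  by (auto simp: kerop_def redop_smult KG_smult)

lemma kerop_diff: "is_redop T \<Longrightarrow> u \<in> kerop T \<Longrightarrow> v \<in> kerop T \<Longrightarrow> u - v \<in> kerop T"
  by (simp add: kerop_def redop_diff KG_diff)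

lemma kerop_uminus: "is_redop T \<Longrightarrow> v \<in> kerop T \<Longrightarrow> - v \<in> kerop T"
  by (simp add: kerop_def redop_uminus KG_uminus)

lemma kerop_sum: "is_redop T \<Longrightarrow> (\<And>a. a \<in> A \<Longrightarrow> f a \<in> kerop T) \<Longrightarrow> sum f A \<in> kerop T"
  by (induction A rule: infinite_finite_induct) (auto intro: kerop_add kerop_zero)

lemma kerop_expansion:
  "is_redop T \<Longrightarrow> v \<in> kerop T \<Longrightarrow> v = (\<Sum>h\<in>supp v \<inter> red T. smult (v h) (kbasis T h))"
  using diff_redop_expansion[of T v] by (simp add: kerop_def)

lemma lt_kerop_in_red:
  assumes T: "is_redop T" and v: "v \<in> kerop T" and nz: "v \<noteq> 0"
  shows "lt v \<in> red T"
proof -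
  let ?S = "supp v \<inter> red T"
  have vK: "v \<in> KG"
    using v by (rule kerop_in_KG)
  have fin: "finite ?S"
    using vK by (auto simp: KG_iff)
  have ex: "v = (\<Sum>h\<in>?S. smult (v h) (kbasis T h))"
    by (rule kerop_expansion[OF T v])
  have ne: "?S \<noteq> {}"
    using ex nz by auto
  define m where "m = Max ?S"
  have m: "m \<in> ?S" "\<forall>g\<in>?S. g \<le> m"
    using Max_in[OF fin ne] fin by (auto simp: m_def)
  have "v h = 0" if "m < h" for h
    by (subst ex) (rule kbasis_comb_at_max(1)[OF T fin _ m that], simp)
  then have "lt v \<le> m"
    using lt_nonzero[OF vK nz] by (metis not_le)
  moreover have "m \<le> lt v"
    using le_lt_if_nonzero[OF vK] m(1) by (simp add: supp_def)
  ultimately show ?thesis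
    using m(1) by simp
qed

lemma red_subset_if_kerop_eq:
  assumes T: "is_redop T" and T': "is_redop T'" and k: "kerop T = kerop T'"
  shows "red T \<subseteq> red T'"
proof
  fix h assume h: "h \<in> red T"
  let ?x = "kbasis T h"
  have xK: "?x \<in> KG"
    by (rule kbasis_in_KG[OF T])
  have "?x h = 1"
    by (rule kbasis_self[OF T h])
  then have xn: "?x \<noteq> 0"
    by auto
  have "lt ?x = h"
    using le_lt_if_nonzero[OF xK, of h] \<open>?x h = 1\<close> lt_nonzero[OF xK xn]
      kbasis_above[OF T, of h "lt ?x"]
    by (cases "h < lt ?x") auto
  then show "h \<in> red T'"
    using lt_kerop_in_red[OF T' _ xn] kbasis_in_kerop[OF T] k by simp
qed

lemma redop_delta_eq_if_kerop_eq:
  assumes T: "is_redop T" and T': "is_redop T'" and k: "kerop T = kerop T'"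
  shows "T (delta g) = T' (delta g)"
proof -
  have rr: "red T = red T'"
    using red_subset_if_kerop_eq[OF T T' k] red_subset_if_kerop_eq[OF T' T k[symmetric]] by blast
  let ?d = "T (delta g) - T' (delta g)"
  have "?d = kbasis T' g - kbasis T g"
    by (simp add: kbasis_def)
  then have dk: "?d \<in> kerop T"
    using kbasis_in_kerop[OF T, of g] kbasis_in_kerop[OF T', of g] k kerop_diff[OF T] by metis
  have "supp ?d \<inter> red T = {}"
    using redop_vanishes_on_red[OF T, of "delta g"] redop_vanishes_on_red[OF T', of "delta g"] rr
    by (auto simp: supp_def)
  then have "?d = 0"
    using kerop_expansion[OF T dk] by simp
  then show ?thesis
    by simp
qed

section \<open>Existence of the reduction operator with a given kernel\<close>

lemma descent_to_empty:
  fixes bad :: "'b \<Rightarrow> 'a::wellorder set"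
  assumes fin: "\<And>x. P x \<Longrightarrow> finite (bad x)"
    and step: "\<And>x. P x \<Longrightarrow> bad x \<noteq> {} \<Longrightarrow>
       \<exists>x'. P x' \<and> R x' x \<and> (\<forall>q\<in>bad x'. q < Max (bad x))"
    and R_refl: "\<And>x. R x x" and R_trans: "\<And>x y z. R x y \<Longrightarrow> R y z \<Longrightarrow> R x z"
    and x: "P x"
  shows "\<exists>x'. P x' \<and> R x' x \<and> bad x' = {}"
proof -
  have descend: "P x \<Longrightarrow> bad x \<noteq> {} \<Longrightarrow> Max (bad x) = p \<Longrightarrow> \<exists>x'. P x' \<and> R x' x \<and> bad x' = {}" for p x
  proof (induction p arbitrary: x rule: less_induct)
    case (less p)
    obtain x' where x': "P x'" "R x' x" "\<forall>q\<in>bad x'. q < p"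
      using step[OF less.prems(1,2)] less.prems(3) by blast
    show ?case
    proof (cases "bad x' = {}")
      case False
      then have "Max (bad x') < p"
        using x' fin[OF x'(1)] by simp
      then obtain x'' where "P x''" "R x'' x'" "bad x'' = {}"
        using less.IH[OF _ x'(1) False refl] by blast
      then show ?thesis
        using x'(2) R_trans by blast
    qed (use x' in blast)
  qed
  show ?thesis
  proof (cases "bad x = {}")
    case False
    show ?thesis
      by (rule descend[OF x False refl])
  qed (use x R_refl in blast)
qed

definition is_subspace :: "('g \<Rightarrow> 'k::field) set \<Rightarrow> bool" where
  "is_subspace V \<longleftrightarrow> V \<subseteq> KG \<and> 0 \<in> V \<and> (\<forall>u\<in>V. \<forall>v\<in>V. u + v \<in> V) \<and> (\<forall>c. \<forall>v\<in>V. smult c v \<in> V)"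

lemma subspace_diff: "is_subspace V \<Longrightarrow> u \<in> V \<Longrightarrow> v \<in> V \<Longrightarrow> u - v \<in> V"
  unfolding is_subspace_def using smult_minus_one[of v] by (metis diff_conv_add_uminus)

lemma subspace_Int: "is_subspace V \<Longrightarrow> is_subspace W \<Longrightarrow> is_subspace (V \<inter> W)"
  unfolding is_subspace_def by (simp only: Int_iff Ball_def) (meson IntD1 IntI subset_iff)

lemma kerop_subspace: "is_redop T \<Longrightarrow> is_subspace (kerop T)"
  unfolding is_subspace_def by (auto intro: kerop_zero kerop_add kerop_smult kerop_in_KG)

definition lead_terms :: "('g::wellorder \<Rightarrow> 'k::field) set \<Rightarrow> 'g set" where
  "lead_terms V = {lt v | v. v \<in> V \<and> v \<noteq> 0}"

text \<open>The normal form of x modulo V is the representative of x + V supported outside the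
  leading terms of V; mapping x to its normal form is the reduction operator with kernel V.\<close>
definition is_nf :: "('g::wellorder \<Rightarrow> 'k::field) set \<Rightarrow> ('g \<Rightarrow> 'k) \<Rightarrow> ('g \<Rightarrow> 'k) \<Rightarrow> bool" where
  "is_nf V x w \<longleftrightarrow> w \<in> KG \<and> x - w \<in> V \<and> supp w \<inter> lead_terms V = {}"

lemma cancel_max_lead_term:
  fixes V :: "('g::wellorder \<Rightarrow> 'k::field) set"
  assumes V: "is_subspace V" and x: "x \<in> KG" and ne: "supp x \<inter> lead_terms V \<noteq> {}"
  shows "\<exists>x'. x' \<in> KG \<and> x - x' \<in> V \<and>
    (\<forall>q\<in>supp x' \<inter> lead_terms V. q < Max (supp x \<inter> lead_terms V))"
proof -
  define p where "p = Max (supp x \<inter> lead_terms V)"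
  have fin: "finite (supp x \<inter> lead_terms V)"
    using x by (simp add: KG_iff)
  have p: "p \<in> supp x \<inter> lead_terms V" and pmax: "\<forall>q\<in>supp x \<inter> lead_terms V. q \<le> p"
    using Max_in[OF fin ne] fin by (auto simp: p_def)
  obtain v where v: "v \<in> V" "v \<noteq> 0" "lt v = p"
    using p by (auto simp: lead_terms_def)
  have vK: "v \<in> KG"
    using v V by (auto simp: is_subspace_def)
  have vp: "v p \<noteq> 0"
    using lt_nonzero[OF vK v(2)] v(3) by simp
  define x' where "x' = x - smult (x p / v p) v"
  have "x - x' \<in> V"
    using V v by (simp add: x'_def is_subspace_def)
  moreover have "x' \<in> KG"
    unfolding x'_def using x vK by (simp add: KG_diff KG_smult)
  moreover have "q < p" if q: "q \<in> supp x' \<inter> lead_terms V" for q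
  proof -
    have "q \<noteq> p"
      using q vp by (auto simp: x'_def supp_def)
    moreover have "\<not> p < q"
    proof
      assume "p < q"
      then have "v q = 0"
        using le_lt_if_nonzero[OF vK, of q] v(3) by fastforce
      then have "q \<in> supp x \<inter> lead_terms V"
        using q by (simp add: x'_def supp_def)
      then show False
        using pmax \<open>p < q\<close> by (meson leD)
    qed
    ultimately show ?thesis
      by simp
  qed
  ultimately show ?thesis
    unfolding p_def[symmetric] by blast
qed

lemma nf_exists:
  fixes V :: "('g::wellorder \<Rightarrow> 'k::field) set"
  assumes V: "is_subspace V" and x: "x \<in> KG"
  shows "\<exists>w. is_nf V x w"
proof -
  have "\<exists>x'. x' \<in> KG \<and> x - x' \<in> V \<and> supp x' \<inter> lead_terms V = {}"
  proof (rule descent_to_empty[where P = "\<lambda>x. x \<in> KG" and R = "\<lambda>x' x. x - x' \<in> V"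
        and bad = "\<lambda>x. supp x \<inter> lead_terms V"])
    show "\<And>x. x \<in> KG \<Longrightarrow> finite (supp x \<inter> lead_terms V)"
      by (simp add: KG_iff)
    show "\<And>x. x - x \<in> V"
      using V by (simp add: is_subspace_def)
    show "z - x \<in> V" if "y - x \<in> V" "z - y \<in> V" for x y z :: "'g \<Rightarrow> 'k"
    proof -
      have "(z - y) + (y - x) \<in> V"
        using that V unfolding is_subspace_def by blast
      then show ?thesis
        by simp
    qed
  qed (use cancel_max_lead_term[OF V] x in auto)
  then show ?thesis
    by (auto simp: is_nf_def)
qed

lemma nf_unique:
  assumes V: "is_subspace V" and w1: "is_nf V x w1" and w2: "is_nf V x w2"
  shows "w1 = w2"
proof (rule ccontr)
  let ?d = "w1 - w2"
  assume "w1 \<noteq> w2"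
  then have dn: "?d \<noteq> 0"
    by simp
  have dK: "?d \<in> KG"
    using w1 w2 by (simp add: is_nf_def KG_diff)
  have "(x - w2) - (x - w1) \<in> V"
    using subspace_diff[OF V] w1 w2 unfolding is_nf_def by blast
  then have "?d \<in> V"
    by simp
  then have lead: "lt ?d \<in> lead_terms V"
    unfolding lead_terms_def using dn by blast
  have "?d (lt ?d) \<noteq> 0"
    by (rule lt_nonzero[OF dK dn])
  then have "lt ?d \<in> supp w1 \<or> lt ?d \<in> supp w2"
    by (auto simp: supp_def)
  then show False
    using lead w1 w2 unfolding is_nf_def by blast
qed

definition nf_op :: "('g::wellorder \<Rightarrow> 'k::field) set \<Rightarrow> ('g \<Rightarrow> 'k) \<Rightarrow> ('g \<Rightarrow> 'k)" where
  "nf_op V x = (SOME w. is_nf V x w)"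

lemma nf_op_is_nf: "is_subspace V \<Longrightarrow> x \<in> KG \<Longrightarrow> is_nf V x (nf_op V x)"
  unfolding nf_op_def by (rule someI_ex[OF nf_exists])

lemma nf_op_eq: "is_subspace V \<Longrightarrow> x \<in> KG \<Longrightarrow> is_nf V x w \<Longrightarrow> nf_op V x = w"
  using nf_op_is_nf nf_unique by blast

lemma nf_op_delta_vle:
  assumes V: "is_subspace V"
  shows "vle (nf_op V (delta g)) (delta g)"
proof (cases "nf_op V (delta g) = delta g")
  case False
  let ?w = "nf_op V (delta g)"
  let ?d = "delta g - ?w"
  have nf: "is_nf V (delta g) ?w"
    using nf_op_is_nf[OF V] by simp
  have wK: "?w \<in> KG" and dK: "?d \<in> KG"
    using nf by (simp_all add: is_nf_def KG_diff)
  have dn: "?d \<noteq> 0"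
    using False by simp
  have ltd: "lt ?d \<in> lead_terms V"
    using nf dn by (auto simp: lead_terms_def is_nf_def)
  then have "?w (lt ?d) = 0"
    using nf by (auto simp: is_nf_def supp_def)
  then have ltd_g: "lt ?d = g" and wg: "?w g = 0"
    using lt_nonzero[OF dK dn] by (auto simp: delta_apply split: if_splits)
  show ?thesis
  proof (cases "?w = 0")
    case wn: False
    have "?w (lt ?w) \<noteq> 0"
      by (rule lt_nonzero[OF wK wn])
    moreover have "\<not> g < lt ?w"
    proof
      assume "g < lt ?w"
      then have "lt ?w \<noteq> g"
        by simp
      then have "?d (lt ?w) \<noteq> 0"
        using \<open>?w (lt ?w) \<noteq> 0\<close> by (simp add: delta_apply)
      then have "lt ?w \<le> lt ?d"
        by (rule le_lt_if_nonzero[OF dK])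
      then show False
        using ltd_g \<open>g < lt ?w\<close> by simp
    qed
    ultimately have "lt ?w < g"
      using wg by (metis linorder_neqE)
    then show ?thesis
      using wn by (simp add: vle_def vless_def)
  qed (simp add: vle_def vless_def)
qed (simp add: vle_def)

lemma nf_op_redop:
  assumes V: "is_subspace V"
  shows "is_redop (nf_op V)"
  unfolding is_redop_def
proof (intro conjI ballI allI)
  fix u v :: "'a \<Rightarrow> 'b" and c
  assume u: "u \<in> KG" and v: "v \<in> KG"
  have nu: "is_nf V u (nf_op V u)" and nv: "is_nf V v (nf_op V v)"
    using nf_op_is_nf[OF V] u v by blast+
  show "nf_op V v \<in> KG"
    using nv by (simp add: is_nf_def)
  show "nf_op V (nf_op V v) = nf_op V v"
    using nv V by (intro nf_op_eq) (auto simp: is_nf_def is_subspace_def)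
  have "smult c v - smult c (nf_op V v) = smult c (v - nf_op V v)"
    by (simp add: smult_diff_right)
  then have "is_nf V (smult c v) (smult c (nf_op V v))"
    using nv V by (auto simp: is_nf_def is_subspace_def KG_smult supp_def)
  then show "nf_op V (smult c v) = smult c (nf_op V v)"
    using V v by (simp add: nf_op_eq KG_smult)
  have "(u - nf_op V u) + (v - nf_op V v) \<in> V"
    using nu nv V unfolding is_nf_def is_subspace_def by blast
  moreover have "(u - nf_op V u) + (v - nf_op V v) = u + v - (nf_op V u + nf_op V v)"
    by simp
  moreover have "supp (nf_op V u + nf_op V v) \<subseteq> supp (nf_op V u) \<union> supp (nf_op V v)"
    by (auto simp: supp_def)
  ultimately have "is_nf V (u + v) (nf_op V u + nf_op V v)"
    using nu nv by (auto simp: is_nf_def intro: KG_add)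
  then show "nf_op V (u + v) = nf_op V u + nf_op V v"
    using V u v by (simp add: nf_op_eq KG_add)
next
  fix g
  show "vle (nf_op V (delta g)) (delta g)"
    by (rule nf_op_delta_vle[OF V])
qed

lemma kerop_nf_op:
  assumes V: "is_subspace V"
  shows "kerop (nf_op V) = V"
proof (intro equalityI subsetI)
  fix v assume "v \<in> kerop (nf_op V)"
  then show "v \<in> V"
    using nf_op_is_nf[OF V, of v] by (simp add: is_nf_def kerop_def)
next
  fix v assume v: "v \<in> V"
  then have "v \<in> KG" and "is_nf V v 0"
    using V by (auto simp: is_subspace_def is_nf_def supp_def)
  then show "v \<in> kerop (nf_op V)"
    using nf_op_eq[OF V] by (simp add: kerop_def)
qed

lemma kerinv_at_eq: "is_redop T \<Longrightarrow> kerop T = K \<Longrightarrow> kerinv_at K g = T (delta g)"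
  unfolding kerinv_at_def by (rule the_equality) (auto intro: redop_delta_eq_if_kerop_eq)

lemma kerinv_red_eq: "is_redop T \<Longrightarrow> kerop T = K \<Longrightarrow> kerinv_red K = red T"
  by (simp add: kerinv_red_def red_def kerinv_at_eq)

lemma tdec_spec:
  assumes T: "is_redop T" and v: "v \<in> kerop T"
  shows "finite {g. tdec T v g \<noteq> 0}" and "\<forall>g. tdec T v g \<noteq> 0 \<longrightarrow> g \<in> red T"
    and "v = (\<Sum>g\<in>{g. tdec T v g \<noteq> 0}. smult (tdec T v g) (kbasis T g))"
proof -
  let ?P = "\<lambda>l. finite {g. l g \<noteq> 0} \<and> (\<forall>g. l g \<noteq> 0 \<longrightarrow> g \<in> red T) \<and>
      v = (\<Sum>g\<in>{g. l g \<noteq> 0}. smult (l g) (kbasis T g))"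
  define l0 where "l0 = (\<lambda>g. if g \<in> red T then v g else 0)"
  have supp_l0: "{g. l0 g \<noteq> 0} = supp v \<inter> red T"
    by (auto simp: l0_def supp_def)
  have "v = (\<Sum>g\<in>supp v \<inter> red T. smult (l0 g) (kbasis T g))"
    by (subst kerop_expansion[OF T v]) (simp add: l0_def)
  then have P0: "?P l0"
    using kerop_in_KG[OF v] unfolding supp_l0 by (auto simp: KG_iff l0_def)
  have "l = l0" if "?P l" for l
  proof
    fix h
    show "l h = l0 h"
    proof (cases "h \<in> red T")
      case True
      have "v h = (\<Sum>g\<in>{g. l g \<noteq> 0}. smult (l g) (kbasis T g)) h"
        using that by simp
      then show ?thesis
        using kbasis_comb_on_red[OF T _ True, of "{g. l g \<noteq> 0}" l] that True
        by (auto simp: l0_def)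
    qed (use that in \<open>auto simp: l0_def\<close>)
  qed
  then have "?P (THE l. ?P l)"
    by (rule theI[of ?P l0, OF P0])
  then have P: "?P (tdec T v)"
    unfolding tdec_def kbasis_def .
  from P show "finite {g. tdec T v g \<noteq> 0}"
    by (rule conjunct1)
  from P show "\<forall>g. tdec T v g \<noteq> 0 \<longrightarrow> g \<in> red T"
    by (rule conjunct1[OF conjunct2])
  from P show "v = (\<Sum>g\<in>{g. tdec T v g \<noteq> 0}. smult (tdec T v g) (kbasis T g))"
    by (rule conjunct2[OF conjunct2])
qed

section \<open>Tuples of kernel vectors and their coefficients\<close>

definition redops_upto :: "(nat \<Rightarrow> ('g::wellorder \<Rightarrow> 'k::field) \<Rightarrow> ('g \<Rightarrow> 'k)) \<Rightarrow> nat \<Rightarrow> bool" where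
  "redops_upto Ts k \<longleftrightarrow> (\<forall>j\<in>{1..k}. is_redop (Ts j))"

definition evec :: "(nat \<Rightarrow> ('g \<Rightarrow> 'k::field) \<Rightarrow> ('g \<Rightarrow> 'k)) \<Rightarrow> nat \<times> 'g \<Rightarrow> 'g \<Rightarrow> 'k" where
  "evec Ts p = kbasis (Ts (fst p)) (snd p)"

definition csupp :: "(nat \<times> 'g \<Rightarrow> 'k::zero) \<Rightarrow> (nat \<times> 'g) set" where
  "csupp c = {p. c p \<noteq> 0}"

definition lincomb :: "(nat \<Rightarrow> ('g \<Rightarrow> 'k::field) \<Rightarrow> ('g \<Rightarrow> 'k)) \<Rightarrow> (nat \<times> 'g \<Rightarrow> 'k) \<Rightarrow> 'g \<Rightarrow> 'k" where
  "lincomb Ts c = (\<Sum>q\<in>csupp c. smult (c q) (evec Ts q))"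

definition coeffs_at :: "nat \<Rightarrow> (nat \<times> 'g \<Rightarrow> 'k::zero) \<Rightarrow> nat \<times> 'g \<Rightarrow> 'k" where
  "coeffs_at j c = (\<lambda>q. if fst q = j then c q else 0)"

lemma lincomb_eq_sum:
  "finite S \<Longrightarrow> csupp c \<subseteq> S \<Longrightarrow> lincomb Ts c = (\<Sum>q\<in>S. smult (c q) (evec Ts q))"
  unfolding lincomb_def by (rule sum.mono_neutral_left) (auto simp: csupp_def)

lemma lincomb_diff_scaled:
  assumes "finite (csupp c)" and "finite (csupp d)"
  shows "lincomb Ts (\<lambda>q. c q - a * d q) = lincomb Ts c - smult a (lincomb Ts d)"
proof -
  let ?S = "csupp c \<union> csupp d"
  have fin: "finite ?S"
    using assms by simp
  have "lincomb Ts (\<lambda>q. c q - a * d q) = (\<Sum>q\<in>?S. smult (c q - a * d q) (evec Ts q))"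
    using fin by (rule lincomb_eq_sum) (auto simp: csupp_def)
  also have "\<dots> = (\<Sum>q\<in>?S. smult (c q) (evec Ts q)) - smult a (\<Sum>q\<in>?S. smult (d q) (evec Ts q))"
    by (rule ext) (simp add: sum_fun_apply left_diff_distrib sum_subtractf sum_distrib_left mult.assoc)
  also have "\<dots> = lincomb Ts c - smult a (lincomb Ts d)"
    using lincomb_eq_sum[OF fin, of c Ts] lincomb_eq_sum[OF fin, of d Ts] by (simp add: csupp_def)
  finally show ?thesis .
qed

lemma valid_coeffs_finite: "valid_coeffs Ts k c \<Longrightarrow> finite (csupp c)"
  by (simp add: valid_coeffs_def csupp_def)

lemma valid_coeffs_range:
  "valid_coeffs Ts k c \<Longrightarrow> c q \<noteq> 0 \<Longrightarrow> fst q \<in> {1..k} \<and> snd q \<in> red (Ts (fst q))"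
  unfolding valid_coeffs_def by blast

lemma valid_coeffs_diff_scaled:
  assumes c: "valid_coeffs Ts k c" and d: "valid_coeffs Ts k d"
  shows "valid_coeffs Ts k (\<lambda>q. c q - a * d q)"
  unfolding valid_coeffs_def
proof (intro conjI allI impI)
  have "{q. c q - a * d q \<noteq> 0} \<subseteq> csupp c \<union> csupp d"
    by (auto simp: csupp_def)
  then show "finite {q. c q - a * d q \<noteq> 0}"
    using valid_coeffs_finite[OF c] valid_coeffs_finite[OF d] by (auto intro: finite_subset)
  fix q assume "c q - a * d q \<noteq> 0"
  then have "c q \<noteq> 0 \<or> d q \<noteq> 0"
    by auto
  then show "fst q \<in> {1..k}" "snd q \<in> red (Ts (fst q))"
    using valid_coeffs_range[OF c, of q] valid_coeffs_range[OF d, of q] by auto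
qed

lemma combo_apply_sum:
  "combo Ts c j = (\<Sum>q\<in>csupp c. smult (coeffs_at j c q) (evec Ts q))"
  unfolding combo_def csupp_def sum_fun_apply[where x = j]
  by (rule sum.cong) (auto simp: ebas_def coeffs_at_def evec_def kbasis_def)

lemma combo_apply:
  assumes "finite (csupp c)"
  shows "combo Ts c j = lincomb Ts (coeffs_at j c)"
  unfolding combo_apply_sum
  using assms by (intro lincomb_eq_sum[symmetric]) (auto simp: csupp_def coeffs_at_def)

lemma sum_combo:
  assumes c: "valid_coeffs Ts k c"
  shows "(\<Sum>j\<in>{1..k}. combo Ts c j) = lincomb Ts c"
proof -
  have "(\<Sum>j\<in>{1..k}. combo Ts c j) = (\<Sum>q\<in>csupp c. \<Sum>j\<in>{1..k}. smult (coeffs_at j c q) (evec Ts q))"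
    unfolding combo_apply_sum by (rule sum.swap)
  also have "\<dots> = (\<Sum>q\<in>csupp c. smult (c q) (evec Ts q))"
  proof (rule sum.cong)
    fix q assume "q \<in> csupp c"
    then have "fst q \<in> {1..k}"
      using valid_coeffs_range[OF c] by (simp add: csupp_def)
    then show "(\<Sum>j\<in>{1..k}. smult (coeffs_at j c q) (evec Ts q)) = smult (c q) (evec Ts q)"
      by (simp add: coeffs_at_def if_distrib[of "\<lambda>a. smult a _"] cong: if_cong)
  qed simp
  finally show ?thesis
    by (simp add: lincomb_def)
qed

lemma combo_in_kertuples:
  assumes Ts: "redops_upto Ts k" and c: "valid_coeffs Ts k c"
  shows "combo Ts c \<in> kertuples Ts k"
  unfolding kertuples_def
proof (intro CollectI conjI ballI allI impI)
  fix j assume j: "j \<in> {1..k}"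
  then have T: "is_redop (Ts j)"
    using Ts by (simp add: redops_upto_def)
  have "smult (coeffs_at j c q) (evec Ts q) \<in> kerop (Ts j)" for q
    using kbasis_in_kerop[OF T] kerop_smult[OF T] kerop_zero[OF T]
    by (auto simp: coeffs_at_def evec_def)
  then show "combo Ts c j \<in> kerop (Ts j)"
    unfolding combo_apply_sum by (rule kerop_sum[OF T])
next
  fix j assume "j \<notin> {1..k}"
  then have "coeffs_at j c q = 0" for q
    using valid_coeffs_range[OF c, of q] by (auto simp: coeffs_at_def)
  then show "combo Ts c j = 0"
    by (simp add: combo_apply_sum)
qed

lemma combo_at_red:
  assumes Ts: "redops_upto Ts k" and c: "valid_coeffs Ts k c"
    and j: "j \<in> {1..k}" and g: "g \<in> red (Ts j)"
  shows "combo Ts c j g = c (j, g)"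
proof -
  have T: "is_redop (Ts j)"
    using Ts j by (simp add: redops_upto_def)
  have "combo Ts c j g = (\<Sum>q\<in>csupp c. if (j, g) = q then c q else 0)"
    unfolding combo_apply_sum sum_fun_apply
    by (rule sum.cong) (auto simp: coeffs_at_def evec_def kbasis_on_red[OF T g] delta_apply)
  also have "\<dots> = c (j, g)"
    using valid_coeffs_finite[OF c] by (simp add: csupp_def)
  finally show ?thesis .
qed

text \<open>The coefficient of e_{j,g} in a tuple of kernel vectors is the g-th coordinate of its
  j-th component, since for g in red(T_j) the g-th coordinate of g' - T_j(g') is 1 if g' = g
  and 0 otherwise.\<close>
definition tuple_coeffs ::
  "(nat \<Rightarrow> ('g \<Rightarrow> 'k::field) \<Rightarrow> ('g \<Rightarrow> 'k)) \<Rightarrow> nat \<Rightarrow> (nat \<Rightarrow> 'g \<Rightarrow> 'k) \<Rightarrow> nat \<times> 'g \<Rightarrow> 'k" where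
  "tuple_coeffs Ts k w =
     (\<lambda>p. if fst p \<in> {1..k} \<and> snd p \<in> red (Ts (fst p)) then w (fst p) (snd p) else 0)"

lemma tuple_coeffs_valid:
  assumes w: "w \<in> kertuples Ts k"
  shows "valid_coeffs Ts k (tuple_coeffs Ts k w)"
proof -
  have "{p. tuple_coeffs Ts k w p \<noteq> 0} \<subseteq> (SIGMA j:{1..k}. supp (w j))"
    by (auto simp: tuple_coeffs_def supp_def split: if_splits)
  moreover have "finite (SIGMA j:{1..k}. supp (w j))"
    using w by (auto simp: kertuples_def kerop_def KG_iff)
  ultimately show ?thesis
    unfolding valid_coeffs_def by (auto simp: tuple_coeffs_def finite_subset split: if_splits)
qed

lemma combo_tuple_coeffs:
  assumes Ts: "redops_upto Ts k" and w: "w \<in> kertuples Ts k"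
  shows "combo Ts (tuple_coeffs Ts k w) = w"
proof
  fix j
  let ?c = "tuple_coeffs Ts k w"
  show "combo Ts ?c j = w j"
  proof (cases "j \<in> {1..k}")
    case False
    then have "coeffs_at j ?c = 0"
      by (auto simp: coeffs_at_def tuple_coeffs_def)
    then have "combo Ts ?c j = 0"
      using combo_apply[OF valid_coeffs_finite[OF tuple_coeffs_valid[OF w]]]
      by (simp add: lincomb_def csupp_def)
    then show ?thesis
      using w False by (simp add: kertuples_def)
  next
    case True
    have T: "is_redop (Ts j)"
      using Ts True by (simp add: redops_upto_def)
    have wj: "w j \<in> kerop (Ts j)"
      using w True by (simp add: kertuples_def)
    have supp_eq: "csupp (coeffs_at j ?c) = Pair j ` (supp (w j) \<inter> red (Ts j))"
      using True by (auto simp: csupp_def coeffs_at_def tuple_coeffs_def supp_def split: if_splits)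
    have "combo Ts ?c j = lincomb Ts (coeffs_at j ?c)"
      by (rule combo_apply[OF valid_coeffs_finite[OF tuple_coeffs_valid[OF w]]])
    also have "\<dots> = (\<Sum>g\<in>supp (w j) \<inter> red (Ts j). smult (w j g) (kbasis (Ts j) g))"
      unfolding lincomb_def supp_eq using True
      by (simp add: sum.reindex inj_on_def coeffs_at_def tuple_coeffs_def evec_def)
    also have "\<dots> = w j"
      by (rule kerop_expansion[OF T wj, symmetric])
    finally show ?thesis .
  qed
qed

lemma tuple_coeffs_combo:
  assumes Ts: "redops_upto Ts k" and c: "valid_coeffs Ts k c"
  shows "tuple_coeffs Ts k (combo Ts c) = c"
proof
  fix p :: "nat \<times> 'a"
  show "tuple_coeffs Ts k (combo Ts c) p = c p"
  proof (cases "fst p \<in> {1..k} \<and> snd p \<in> red (Ts (fst p))")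
    case True
    then show ?thesis
      using combo_at_red[OF Ts c, of "fst p" "snd p"] by (simp add: tuple_coeffs_def)
  next
    case False
    then show ?thesis
      using valid_coeffs_range[OF c, of p] by (auto simp: tuple_coeffs_def)
  qed
qed

lemma coeffs_eq_tuple_coeffs:
  assumes Ts: "redops_upto Ts k" and w: "w \<in> kertuples Ts k"
  shows "coeffs Ts k w = tuple_coeffs Ts k w"
  unfolding coeffs_def
proof (rule the_equality)
  show "valid_coeffs Ts k (tuple_coeffs Ts k w) \<and> combo Ts (tuple_coeffs Ts k w) = w"
    using tuple_coeffs_valid[OF w] combo_tuple_coeffs[OF Ts w] by simp
  fix c assume "valid_coeffs Ts k c \<and> combo Ts c = w"
  then show "c = tuple_coeffs Ts k w"
    using tuple_coeffs_combo[OF Ts] by metis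
qed

lemma coeffs_combo:
  "redops_upto Ts k \<Longrightarrow> valid_coeffs Ts k c \<Longrightarrow> coeffs Ts k (combo Ts c) = c"
  by (simp add: coeffs_eq_tuple_coeffs combo_in_kertuples tuple_coeffs_combo)

section \<open>Canonical decompositions\<close>

lemma pless_iff_less: "pless p q \<longleftrightarrow> p < q"
  by (simp add: pless_def less_prod_def')

lemma ltsyzE:
  assumes Ts: "redops_upto Ts k" and p: "p \<in> ltsyz Ts k"
  obtains d where "valid_coeffs Ts k d" "lincomb Ts d = 0" "d p \<noteq> 0" "\<forall>q. d q \<noteq> 0 \<longrightarrow> q \<le> p"
proof -
  obtain s where s: "s \<in> syz Ts k" "is_lead (coeffs Ts k s) p"
    using p by (auto simp: ltsyz_def)
  have kt: "s \<in> kertuples Ts k"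
    using s by (simp add: syz_def)
  let ?d = "coeffs Ts k s"
  have d: "valid_coeffs Ts k ?d"
    using tuple_coeffs_valid[OF kt] coeffs_eq_tuple_coeffs[OF Ts kt] by simp
  have "lincomb Ts ?d = (\<Sum>j\<in>{1..k}. s j)"
    using sum_combo[OF d] combo_tuple_coeffs[OF Ts kt] coeffs_eq_tuple_coeffs[OF Ts kt] by simp
  also have "\<dots> = 0"
    using s by (simp add: syz_def)
  finally have "lincomb Ts ?d = 0" .
  moreover have "?d p \<noteq> 0" "\<forall>q. ?d q \<noteq> 0 \<longrightarrow> q \<le> p"
    using s(2) unfolding is_lead_def pless_iff_less le_less by blast+
  ultimately show ?thesis
    using d that by blast
qed

lemma Max_csupp_in_ltsyz:
  assumes Ts: "redops_upto Ts k" and d: "valid_coeffs Ts k d"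
    and nz: "d \<noteq> 0" and syz: "lincomb Ts d = 0"
  shows "Max (csupp d) \<in> ltsyz Ts k"
proof -
  let ?s = "combo Ts d"
  let ?m = "Max (csupp d)"
  have fin: "finite (csupp d)"
    by (rule valid_coeffs_finite[OF d])
  have "csupp d \<noteq> {}"
    using nz by (auto simp: csupp_def fun_eq_iff)
  then have m: "?m \<in> csupp d" and mmax: "\<forall>q\<in>csupp d. q \<le> ?m"
    using fin by simp_all
  have "?s \<in> syz Ts k"
    using combo_in_kertuples[OF Ts d] sum_combo[OF d] syz by (simp add: syz_def)
  moreover have "?s (fst ?m) (snd ?m) = d ?m"
    using combo_at_red[OF Ts d] valid_coeffs_range[OF d, of ?m] m by (simp add: csupp_def)
  then have "?s \<noteq> 0"
    using m by (auto simp: csupp_def)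
  moreover have "is_lead (coeffs Ts k ?s) ?m"
    unfolding coeffs_combo[OF Ts d] is_lead_def pless_iff_less
    using m mmax by (auto simp: csupp_def order.order_iff_strict)
  ultimately show ?thesis
    by (auto simp: ltsyz_def)
qed

lemma cancel_max_ltsyz:
  assumes Ts: "redops_upto Ts k" and c: "valid_coeffs Ts k c" and ne: "csupp c \<inter> ltsyz Ts k \<noteq> {}"
  shows "\<exists>c'. valid_coeffs Ts k c' \<and> lincomb Ts c' = lincomb Ts c \<and>
    (\<forall>q\<in>csupp c' \<inter> ltsyz Ts k. q < Max (csupp c \<inter> ltsyz Ts k))"
proof -
  define p where "p = Max (csupp c \<inter> ltsyz Ts k)"
  have fin: "finite (csupp c \<inter> ltsyz Ts k)"
    using valid_coeffs_finite[OF c] by blast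
  have p: "p \<in> csupp c \<inter> ltsyz Ts k" and pmax: "\<forall>q\<in>csupp c \<inter> ltsyz Ts k. q \<le> p"
    using Max_in[OF fin ne] fin by (auto simp: p_def)
  obtain d where d: "valid_coeffs Ts k d" "lincomb Ts d = 0" "d p \<noteq> 0" "\<forall>q. d q \<noteq> 0 \<longrightarrow> q \<le> p"
    using ltsyzE[OF Ts] p by blast
  define c' where "c' = (\<lambda>q. c q - c p / d p * d q)"
  have "valid_coeffs Ts k c'"
    unfolding c'_def by (rule valid_coeffs_diff_scaled[OF c d(1)])
  moreover have "lincomb Ts c' = lincomb Ts c"
    unfolding c'_def lincomb_diff_scaled[OF valid_coeffs_finite[OF c] valid_coeffs_finite[OF d(1)]]
    using d(2) by simp
  moreover have "q < p" if q: "q \<in> csupp c' \<inter> ltsyz Ts k" for q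
  proof -
    have "q \<noteq> p"
      using q d(3) by (auto simp: c'_def csupp_def)
    moreover have "\<not> p < q"
    proof
      assume "p < q"
      then have "d q = 0"
        using d(4) leD by blast
      then have "q \<in> csupp c \<inter> ltsyz Ts k"
        using q by (simp add: c'_def csupp_def)
      then show False
        using pmax \<open>p < q\<close> by (meson leD)
    qed
    ultimately show ?thesis
      by simp
  qed
  ultimately show ?thesis
    unfolding p_def[symmetric] by blast
qed

lemma candec_exists:
  assumes Ts: "redops_upto Ts k" and c0: "valid_coeffs Ts k c0"
  shows "\<exists>c. valid_coeffs Ts k c \<and> lincomb Ts c = lincomb Ts c0 \<and> csupp c \<inter> ltsyz Ts k = {}"
proof (rule descent_to_empty[where P = "valid_coeffs Ts k" and R = "\<lambda>c' c. lincomb Ts c' = lincomb Ts c"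
      and bad = "\<lambda>c. csupp c \<inter> ltsyz Ts k"])
  show "\<And>c. valid_coeffs Ts k c \<Longrightarrow> finite (csupp c \<inter> ltsyz Ts k)"
    using valid_coeffs_finite by blast
qed (use cancel_max_ltsyz[OF Ts] c0 in auto)

lemma candec_unique:
  assumes Ts: "redops_upto Ts k" and c1: "valid_coeffs Ts k c1" and c2: "valid_coeffs Ts k c2"
    and can1: "csupp c1 \<inter> ltsyz Ts k = {}" and can2: "csupp c2 \<inter> ltsyz Ts k = {}"
    and eq: "lincomb Ts c1 = lincomb Ts c2"
  shows "c1 = c2"
proof (rule ccontr)
  define d where "d = (\<lambda>q. c1 q - 1 * c2 q)"
  assume "c1 \<noteq> c2"
  then have nz: "d \<noteq> 0"
    by (auto simp: d_def fun_eq_iff)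
  have d: "valid_coeffs Ts k d"
    unfolding d_def by (rule valid_coeffs_diff_scaled[OF c1 c2])
  have "lincomb Ts d = 0"
    unfolding d_def lincomb_diff_scaled[OF valid_coeffs_finite[OF c1] valid_coeffs_finite[OF c2]]
    using eq by (simp add: smult_def)
  then have "Max (csupp d) \<in> ltsyz Ts k"
    by (rule Max_csupp_in_ltsyz[OF Ts d nz])
  moreover have "Max (csupp d) \<in> csupp d"
    using nz valid_coeffs_finite[OF d] by (intro Max_in) (auto simp: csupp_def fun_eq_iff)
  then have "Max (csupp d) \<in> csupp c1 \<union> csupp c2"
    by (auto simp: csupp_def d_def)
  ultimately show False
    using can1 can2 by blast
qed

lemma candec_spec:
  assumes Ts: "redops_upto Ts k" and c0: "valid_coeffs Ts k c0" and v: "v = lincomb Ts c0"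
  shows "valid_coeffs Ts k (candec Ts k v)" and "v = lincomb Ts (candec Ts k v)"
proof -
  let ?P = "\<lambda>c. valid_coeffs Ts k c \<and> csupp c \<inter> ltsyz Ts k = {} \<and> v = lincomb Ts c"
  obtain c where c: "?P c"
    using candec_exists[OF Ts c0] v by metis
  have "c' = c" if "?P c'" for c'
    using candec_unique[OF Ts, of c' c] that c by simp
  then have "?P (THE c. ?P c)"
    using c by (rule theI[of ?P c, rotated])
  moreover have "candec Ts k v = (THE c. ?P c)"
    unfolding candec_def lincomb_def csupp_def evec_def kbasis_def by (simp add: disjoint_iff)
  ultimately show "valid_coeffs Ts k (candec Ts k v)" and "v = lincomb Ts (candec Ts k v)"
    by simp_all
qed

lemma valid_coeffs_mono: "valid_coeffs Ts k c \<Longrightarrow> k \<le> k' \<Longrightarrow> valid_coeffs Ts k' c"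
  unfolding valid_coeffs_def using le_trans by fastforce

lemma valid_coeffs_at_position:
  assumes "j \<in> {1..k}" and "finite {g. l g \<noteq> 0}" and "\<forall>g. l g \<noteq> 0 \<longrightarrow> g \<in> red (Ts j)"
  shows "valid_coeffs Ts k (\<lambda>p. if fst p = j then l (snd p) else 0)"
proof -
  have "{p. (if fst p = j then l (snd p) else 0) \<noteq> 0} = Pair j ` {g. l g \<noteq> 0}"
    by (force split: if_splits)
  then show ?thesis
    using assms unfolding valid_coeffs_def by (auto split: if_splits)
qed

lemma lincomb_at_position:
  "lincomb Ts (\<lambda>p. if fst p = j then l (snd p) else 0) =
     (\<Sum>g\<in>{g. l g \<noteq> 0}. smult (l g) (kbasis (Ts j) g))"
proof -
  have "csupp (\<lambda>p. if fst p = j then l (snd p) else 0) = Pair j ` {g. l g \<noteq> 0}"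
    by (force simp: csupp_def split: if_splits)
  then show ?thesis
    unfolding lincomb_def by (simp add: sum.reindex inj_on_def evec_def)
qed

section \<open>Sums of kernels and syzygies\<close>

lemma kersumE:
  assumes "v \<in> kersum Ts k"
  obtains w where "v = (\<Sum>j\<in>{1..k}. w j)" "\<forall>j\<in>{1..k}. w j \<in> kerop (Ts j)"
  using assms unfolding kersum_def by blast

lemma kersumI: "\<forall>j\<in>{1..k}. w j \<in> kerop (Ts j) \<Longrightarrow> (\<Sum>j\<in>{1..k}. w j) \<in> kersum Ts k"
  unfolding kersum_def by blast

lemma kersum_lincomb:
  assumes Ts: "redops_upto Ts k" and v: "v \<in> kersum Ts k"
  obtains c where "valid_coeffs Ts k c" "v = lincomb Ts c"
proof -
  obtain w where w: "v = (\<Sum>j\<in>{1..k}. w j)" "\<forall>j\<in>{1..k}. w j \<in> kerop (Ts j)"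
    using v by (rule kersumE)
  define w' where "w' = (\<lambda>j. if j \<in> {1..k} then w j else 0)"
  have kt: "w' \<in> kertuples Ts k"
    using w(2) by (simp add: kertuples_def w'_def)
  let ?c = "tuple_coeffs Ts k w'"
  have c: "valid_coeffs Ts k ?c"
    by (rule tuple_coeffs_valid[OF kt])
  have "lincomb Ts ?c = (\<Sum>j\<in>{1..k}. w' j)"
    using sum_combo[OF c] combo_tuple_coeffs[OF Ts kt] by simp
  also have "\<dots> = v"
    using w(1) by (simp add: w'_def)
  finally show ?thesis
    using c that by simp
qed

lemma kersum_subspace:
  assumes Ts: "redops_upto Ts k"
  shows "is_subspace (kersum Ts k)"
proof -
  have T: "\<And>j. j \<in> {1..k} \<Longrightarrow> is_redop (Ts j)"
    using Ts by (simp add: redops_upto_def)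
  have sub: "u \<in> KG" if "u \<in> kersum Ts k" for u
    using that by (rule kersumE) (auto simp: kerop_def intro!: KG_sum)
  have "(\<Sum>j\<in>{1..k}. 0) \<in> kersum Ts k"
    by (rule kersumI) (simp add: T kerop_zero)
  then have zero: "0 \<in> kersum Ts k"
    by simp
  have add: "u + v \<in> kersum Ts k" if u: "u \<in> kersum Ts k" and v: "v \<in> kersum Ts k" for u v
  proof -
    obtain w1 where w1: "u = (\<Sum>j\<in>{1..k}. w1 j)" "\<forall>j\<in>{1..k}. w1 j \<in> kerop (Ts j)"
      using u by (rule kersumE)
    obtain w2 where w2: "v = (\<Sum>j\<in>{1..k}. w2 j)" "\<forall>j\<in>{1..k}. w2 j \<in> kerop (Ts j)"
      using v by (rule kersumE)
    have "(\<Sum>j\<in>{1..k}. w1 j + w2 j) \<in> kersum Ts k"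
      using w1(2) w2(2) T kerop_add by (intro kersumI) blast
    then show ?thesis
      using w1(1) w2(1) by (simp add: sum.distrib)
  qed
  have smult: "smult c u \<in> kersum Ts k" if u: "u \<in> kersum Ts k" for c u
  proof -
    obtain w where w: "u = (\<Sum>j\<in>{1..k}. w j)" "\<forall>j\<in>{1..k}. w j \<in> kerop (Ts j)"
      using u by (rule kersumE)
    have "(\<Sum>j\<in>{1..k}. smult c (w j)) \<in> kersum Ts k"
      using w(2) T kerop_smult by (intro kersumI) blast
    then show ?thesis
      using w(1) by (simp add: smult_sum_right)
  qed
  show ?thesis
    unfolding is_subspace_def using sub zero add smult by blast
qed

lemma joinker_subspace:
  assumes "redops_upto Ts i" and "1 \<le> i"
  shows "is_subspace (joinker Ts i)"
proof -
  have "redops_upto Ts (i - 1)" and "is_redop (Ts i)"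
    using assms by (auto simp: redops_upto_def)
  then show ?thesis
    unfolding joinker_def by (rule subspace_Int[OF kersum_subspace kerop_subspace])
qed

lemma syz_zero: "redops_upto Ts k \<Longrightarrow> 0 \<in> syz Ts k"
  by (auto simp: syz_def kertuples_def redops_upto_def intro: kerop_zero)

lemma syz_add:
  assumes Ts: "redops_upto Ts k" and u: "u \<in> syz Ts k" and v: "v \<in> syz Ts k"
  shows "u + v \<in> syz Ts k"
proof -
  have "(\<Sum>j\<in>{1..k}. (u + v) j) = (\<Sum>j\<in>{1..k}. u j) + (\<Sum>j\<in>{1..k}. v j)"
    by (simp add: sum.distrib)
  then show ?thesis
    using u v Ts by (auto simp: syz_def kertuples_def redops_upto_def intro: kerop_add)
qed

lemma syz_diff:
  assumes Ts: "redops_upto Ts k" and u: "u \<in> syz Ts k" and v: "v \<in> syz Ts k"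
  shows "u - v \<in> syz Ts k"
proof -
  have "(\<Sum>j\<in>{1..k}. (u - v) j) = (\<Sum>j\<in>{1..k}. u j) - (\<Sum>j\<in>{1..k}. v j)"
    by (simp add: sum_subtractf)
  then show ?thesis
    using u v Ts by (auto simp: syz_def kertuples_def redops_upto_def intro: kerop_diff)
qed

lemma syz_tsmult:
  assumes Ts: "redops_upto Ts k" and w: "w \<in> syz Ts k"
  shows "tsmult c w \<in> syz Ts k"
proof -
  have "(\<Sum>j\<in>{1..k}. tsmult c w j) = smult c (\<Sum>j\<in>{1..k}. w j)"
    by (simp add: smult_sum_right)
  also have "\<dots> = 0"
    using w by (simp add: syz_def)
  finally show ?thesis
    using w Ts by (auto simp: syz_def kertuples_def redops_upto_def intro: kerop_smult)
qed

lemma syz_sum: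
  "redops_upto Ts k \<Longrightarrow> (\<And>a. a \<in> A \<Longrightarrow> f a \<in> syz Ts k) \<Longrightarrow> sum f A \<in> syz Ts k"
  by (induction A rule: infinite_finite_induct) (auto intro: syz_add syz_zero)

lemma syz_subset_syz_Suc:
  assumes "redops_upto Ts (Suc m)"
  shows "syz Ts m \<subseteq> syz Ts (Suc m)"
proof
  fix w assume w: "w \<in> syz Ts m"
  have "is_redop (Ts (Suc m))"
    using assms by (simp add: redops_upto_def)
  moreover have "w (Suc m) = 0"
    using w by (simp add: syz_def kertuples_def)
  ultimately show "w \<in> syz Ts (Suc m)"
    using w kerop_zero unfolding syz_def kertuples_def
    by (auto simp: atLeastAtMostSuc_conv)
qed

lemma syz_of_syz_Suc:
  assumes w: "w \<in> syz Ts (Suc m)" and "w (Suc m) = 0"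
  shows "w \<in> syz Ts m"
  using assms unfolding syz_def kertuples_def
  by (auto simp: atLeastAtMostSuc_conv) metis

lemma syz_last_in_joinker:
  assumes Ts: "redops_upto Ts (Suc m)" and w: "w \<in> syz Ts (Suc m)"
  shows "w (Suc m) \<in> joinker Ts (Suc m)"
proof -
  have "w (Suc m) + (\<Sum>j\<in>{1..m}. w j) = 0"
    using w by (simp add: syz_def atLeastAtMostSuc_conv)
  then have "w (Suc m) = (\<Sum>j\<in>{1..m}. - w j)"
    by (simp add: sum_negf eq_neg_iff_add_eq_0)
  moreover have "\<forall>j\<in>{1..m}. - w j \<in> kerop (Ts j)"
    using w Ts by (auto simp: syz_def kertuples_def redops_upto_def intro: kerop_uminus)
  ultimately have "w (Suc m) \<in> kersum Ts m"
    unfolding kersum_def by blast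
  moreover have "w (Suc m) \<in> kerop (Ts (Suc m))"
    using w by (simp add: syz_def kertuples_def)
  ultimately show ?thesis
    by (simp add: joinker_def)
qed

lemma zero_in_tspan: "0 \<in> tspan S"
  unfolding tspan_def by (rule CollectI, rule exI[of _ "{}"], rule exI[of _ "\<lambda>_. 0"]) simp

lemma tspan_subset_syz: "redops_upto Ts k \<Longrightarrow> S \<subseteq> syz Ts k \<Longrightarrow> tspan S \<subseteq> syz Ts k"
  unfolding tspan_def by (auto intro!: syz_sum syz_tsmult)

lemma tspan_image:
  assumes inj: "inj_on f B"
  shows "x \<in> tspan (f ` B) \<longleftrightarrow>
    (\<exists>A c. finite A \<and> A \<subseteq> B \<and> x = (\<Sum>g\<in>A. tsmult (c g) (f g)))"
proof
  assume "x \<in> tspan (f ` B)"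
  then obtain A' c where A': "x = (\<Sum>y\<in>A'. tsmult (c y) y)" "finite A'" "A' \<subseteq> f ` B"
    by (auto simp: tspan_def)
  then obtain A where A: "A \<subseteq> B" "finite A" "A' = f ` A"
    by (meson finite_subset_image)
  have "x = (\<Sum>g\<in>A. tsmult (c (f g)) (f g))"
    unfolding A'(1) A(3) using inj_on_subset[OF inj A(1)] by (simp add: sum.reindex)
  with A(1,2) show "\<exists>A c. finite A \<and> A \<subseteq> B \<and> x = (\<Sum>g\<in>A. tsmult (c g) (f g))"
    by (intro exI[of _ A] exI[of _ "\<lambda>g. c (f g)"] conjI) assumption+
next
  assume "\<exists>A c. finite A \<and> A \<subseteq> B \<and> x = (\<Sum>g\<in>A. tsmult (c g) (f g))"
  then obtain A c where A: "finite A" "A \<subseteq> B" and x: "x = (\<Sum>g\<in>A. tsmult (c g) (f g))"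
    by blast
  have injA: "inj_on f A"
    using inj_on_subset[OF inj A(2)] .
  have "(\<Sum>y\<in>f ` A. tsmult (c (the_inv_into A f y)) y) = (\<Sum>g\<in>A. tsmult (c (the_inv_into A f (f g))) (f g))"
    by (simp add: sum.reindex[OF injA])
  also have "\<dots> = x"
    unfolding x by (rule sum.cong) (simp_all add: the_inv_into_f_f[OF injA])
  finally have "x = (\<Sum>y\<in>f ` A. tsmult (c (the_inv_into A f y)) y)"
    by simp
  moreover have "finite (f ` A)" "f ` A \<subseteq> f ` B"
    using A by (simp_all add: image_mono)
  ultimately show "x \<in> tspan (f ` B)"
    unfolding tspan_def
    by (intro CollectI exI[of _ "f ` A"] exI[of _ "\<lambda>y. c (the_inv_into A f y)"] conjI) assumption+
qed

section \<open>The syzygies s_{i,g}\<close>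

text \<open>Two expansions of the same vector, one in the basis of ker T_{m+1} and one in the basis
  e_{j,g} of ker T_1 \<times> ... \<times> ker T_m, give a syzygy of T_1, ..., T_{m+1}.\<close>
lemma combo_two_expansions:
  assumes Ts: "redops_upto Ts (Suc m)"
    and l: "finite {g. l g \<noteq> 0}" "\<forall>g. l g \<noteq> 0 \<longrightarrow> g \<in> red (Ts (Suc m))"
    and c: "valid_coeffs Ts m c"
    and eq: "(\<Sum>g\<in>{g. l g \<noteq> 0}. smult (l g) (kbasis (Ts (Suc m)) g)) = lincomb Ts c"
  defines "s \<equiv> combo Ts (\<lambda>p. if fst p = Suc m then l (snd p) else - c p)"
  shows "s \<in> syz Ts (Suc m)" and "s (Suc m) = lincomb Ts c"
proof -
  define cl where "cl = (\<lambda>p. if fst p = Suc m then l (snd p) else 0)"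
  define cs where "cs = (\<lambda>q. cl q - 1 * c q)"
  have c_last: "c q = 0" if "fst q = Suc m" for q
    using valid_coeffs_range[OF c, of q] that by force
  have c': "valid_coeffs Ts (Suc m) c"
    using valid_coeffs_mono[OF c] by simp
  have cl: "valid_coeffs Ts (Suc m) cl" "lincomb Ts cl = lincomb Ts c"
    unfolding cl_def lincomb_at_position eq[symmetric]
    by (rule valid_coeffs_at_position[of "Suc m" "Suc m" l Ts, OF _ l]) simp_all
  have s: "s = combo Ts cs"
    unfolding s_def by (rule arg_cong[where f = "combo Ts"], rule ext) (simp add: cs_def cl_def c_last)
  have cs: "valid_coeffs Ts (Suc m) cs"
    unfolding cs_def by (rule valid_coeffs_diff_scaled[OF cl(1) c'])
  have "lincomb Ts cs = 0"
    unfolding cs_def lincomb_diff_scaled[OF valid_coeffs_finite[OF cl(1)] valid_coeffs_finite[OF c']]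
    using cl(2) by (simp add: smult_def)
  then show "s \<in> syz Ts (Suc m)"
    unfolding s syz_def using combo_in_kertuples[OF Ts cs] sum_combo[OF cs] by simp
  have "coeffs_at (Suc m) cs = cl"
    by (auto simp: coeffs_at_def cs_def cl_def c_last)
  then show "s (Suc m) = lincomb Ts c"
    unfolding s combo_apply[OF valid_coeffs_finite[OF cs]] using cl(2) by simp
qed

context
  fixes Ts :: "nat \<Rightarrow> ('g::wellorder \<Rightarrow> 'k::field) \<Rightarrow> ('g \<Rightarrow> 'k)" and m :: nat
    and U :: "('g \<Rightarrow> 'k) \<Rightarrow> ('g \<Rightarrow> 'k)"
  assumes Ts: "redops_upto Ts (Suc m)"
    and U: "is_redop U" and kerop_U: "kerop U = joinker Ts (Suc m)"
begin

lemma svec_syzygy: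
  assumes g0: "g0 \<in> red U"
  shows "svec Ts (Suc m) g0 \<in> syz Ts (Suc m)" and "svec Ts (Suc m) g0 (Suc m) = kbasis U g0"
proof -
  let ?v = "kbasis U g0"
  have Tm: "redops_upto Ts m" and Ti: "is_redop (Ts (Suc m))"
    using Ts by (auto simp: redops_upto_def)
  have "?v \<in> joinker Ts (Suc m)"
    using kbasis_in_kerop[OF U, of g0] kerop_U by simp
  then have vi: "?v \<in> kerop (Ts (Suc m))" and vs: "?v \<in> kersum Ts m"
    by (simp_all add: joinker_def)
  obtain c0 where c0: "valid_coeffs Ts m c0" "?v = lincomb Ts c0"
    using kersum_lincomb[OF Tm vs] .
  have "vvec Ts (Suc m) g0 = ?v"
    by (simp add: vvec_def kbasis_def kerinv_at_eq[OF U kerop_U])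
  then have "svec Ts (Suc m) g0 = combo Ts (\<lambda>p. if fst p = Suc m
      then tdec (Ts (Suc m)) ?v (snd p) else - candec Ts m ?v p)"
    unfolding svec_def Let_def by (simp only: diff_Suc_1)
  moreover have "(\<Sum>g\<in>{g. tdec (Ts (Suc m)) ?v g \<noteq> 0}.
      smult (tdec (Ts (Suc m)) ?v g) (kbasis (Ts (Suc m)) g)) = lincomb Ts (candec Ts m ?v)"
    using tdec_spec(3)[OF Ti vi] candec_spec(2)[OF Tm c0] by simp
  ultimately show "svec Ts (Suc m) g0 \<in> syz Ts (Suc m)" and "svec Ts (Suc m) g0 (Suc m) = ?v"
    using combo_two_expansions[OF Ts tdec_spec(1,2)[OF Ti vi] candec_spec(1)[OF Tm c0]]
      candec_spec(2)[OF Tm c0]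
    by simp_all
qed

lemma svec_inj_on: "inj_on (svec Ts (Suc m)) (red U)"
proof (rule inj_onI)
  fix g g' assume g: "g \<in> red U" and g': "g' \<in> red U" and eq: "svec Ts (Suc m) g = svec Ts (Suc m) g'"
  have "kbasis U g g = kbasis U g' g"
    using svec_syzygy(2)[OF g] svec_syzygy(2)[OF g'] eq by metis
  then have "delta g' g = (1::'k)"
    using kbasis_self[OF U g] kbasis_on_red[OF U g] by simp
  then show "g = g'"
    by (simp add: delta_apply split: if_splits)
qed

lemma last_of_svec_comb:
  assumes "B \<subseteq> red U"
  shows "(\<Sum>g\<in>B. tsmult (c g) (svec Ts (Suc m) g)) (Suc m) = (\<Sum>g\<in>B. smult (c g) (kbasis U g))"
  unfolding sum_fun_apply[where x = "Suc m"] tsmult_apply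
  using assms svec_syzygy(2) by (intro sum.cong) auto

lemma svec_span_subset_syz: "tspan (svec Ts (Suc m) ` red U) \<subseteq> syz Ts (Suc m)"
  using svec_syzygy(1) by (intro tspan_subset_syz[OF Ts]) blast

lemma syz_Suc_decomposition:
  "syz Ts (Suc m) = {a + b | a b. a \<in> syz Ts m \<and> b \<in> tspan (svec Ts (Suc m) ` red U)}"
proof (rule equalityI)
  show "syz Ts (Suc m) \<subseteq> {a + b | a b. a \<in> syz Ts m \<and> b \<in> tspan (svec Ts (Suc m) ` red U)}"
  proof
    fix w assume w: "w \<in> syz Ts (Suc m)"
    let ?w = "w (Suc m)"
    have wU: "?w \<in> kerop U"
      using syz_last_in_joinker[OF Ts w] kerop_U by simp
    define A where "A = supp ?w \<inter> red U"
    have A: "finite A" "A \<subseteq> red U"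
      using kerop_in_KG[OF wU] by (auto simp: A_def KG_iff)
    define b where "b = (\<Sum>g\<in>A. tsmult (?w g) (svec Ts (Suc m) g))"
    have b_span: "b \<in> tspan (svec Ts (Suc m) ` red U)"
      unfolding tspan_image[OF svec_inj_on] b_def using A by (intro exI[of _ A] exI[of _ ?w]) simp
    have "b (Suc m) = (\<Sum>g\<in>A. smult (?w g) (kbasis U g))"
      unfolding b_def by (rule last_of_svec_comb[OF A(2)])
    also have "\<dots> = ?w"
      unfolding A_def by (rule kerop_expansion[OF U wU, symmetric])
    finally have "(w - b) (Suc m) = 0"
      by simp
    moreover have "w - b \<in> syz Ts (Suc m)"
      using syz_diff[OF Ts w subsetD[OF svec_span_subset_syz b_span]] .
    ultimately have "w - b \<in> syz Ts m"
      by (rule syz_of_syz_Suc[rotated])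
    then show "w \<in> {a + b | a b. a \<in> syz Ts m \<and> b \<in> tspan (svec Ts (Suc m) ` red U)}"
      using b_span by (intro CollectI exI[of _ "w - b"] exI[of _ b]) simp
  qed
  show "{a + b | a b. a \<in> syz Ts m \<and> b \<in> tspan (svec Ts (Suc m) ` red U)} \<subseteq> syz Ts (Suc m)"
  proof (rule subsetI, elim CollectE exE conjE)
    fix w a b assume "w = a + b" and a: "a \<in> syz Ts m" and b: "b \<in> tspan (svec Ts (Suc m) ` red U)"
    then show "w \<in> syz Ts (Suc m)"
      using syz_add[OF Ts subsetD[OF syz_subset_syz_Suc[OF Ts] a] subsetD[OF svec_span_subset_syz b]]
      by simp
  qed
qed

text \<open>The coefficients of a combination of the s_{i,g} are read off its last component,
  which vanishes for elements of syz(T_1, ..., T_{i-1}).\<close>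
lemma syz_Int_svec_span: "syz Ts m \<inter> tspan (svec Ts (Suc m) ` red U) = {0}"
proof (rule equalityI)
  show "syz Ts m \<inter> tspan (svec Ts (Suc m) ` red U) \<subseteq> {0}"
  proof
    fix x assume x: "x \<in> syz Ts m \<inter> tspan (svec Ts (Suc m) ` red U)"
    then have "\<exists>A c. finite A \<and> A \<subseteq> red U \<and> x = (\<Sum>g\<in>A. tsmult (c g) (svec Ts (Suc m) g))"
      using tspan_image[OF svec_inj_on] by blast
    then obtain A c where A: "finite A" "A \<subseteq> red U"
      and x_eq: "x = (\<Sum>g\<in>A. tsmult (c g) (svec Ts (Suc m) g))"
      by (elim exE conjE)
    have "x (Suc m) = 0"
      using x by (simp add: syz_def kertuples_def)
    then have last: "(\<Sum>g\<in>A. smult (c g) (kbasis U g)) = 0"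
      unfolding x_eq last_of_svec_comb[OF A(2)] .
    have "c h = 0" if "h \<in> A" for h
      using kbasis_comb_on_red[OF U A(1) subsetD[OF A(2) that], of c] last that by simp
    then have "x = 0"
      unfolding x_eq by (intro sum.neutral ballI) (simp add: tsmult_def)
    then show "x \<in> {0}"
      by simp
  qed
  have "redops_upto Ts m"
    using Ts by (simp add: redops_upto_def)
  then show "{0} \<subseteq> syz Ts m \<inter> tspan (svec Ts (Suc m) ` red U)"
    by (simp add: syz_zero zero_in_tspan)
qed

end

theorem mainTheorem5:
  fixes Ts :: "nat \<Rightarrow> ('g::wellorder \<Rightarrow> 'k::field) \<Rightarrow> ('g \<Rightarrow> 'k)" and n i :: nat
  assumes "\<forall>j\<in>{1..n}. is_redop (Ts j)"
    and "2 \<le> i" and "i \<le> n"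
  shows "syz Ts i = {a + b | a b. a \<in> syz Ts (i - 1) \<and>
                        b \<in> tspan (svec Ts i ` kerinv_red (joinker Ts i))}
         \<and> syz Ts (i - 1) \<inter> tspan (svec Ts i ` kerinv_red (joinker Ts i)) = {0}"
proof -
  obtain m where i: "i = Suc m"
    using assms(2) by (cases i) auto
  have Ts: "redops_upto Ts (Suc m)"
    using assms(1,3) i by (simp add: redops_upto_def)
  have V: "is_subspace (joinker Ts (Suc m))"
    by (rule joinker_subspace[OF Ts]) simp
  let ?U = "nf_op (joinker Ts (Suc m))"
  have U: "is_redop ?U" and kerop_U: "kerop ?U = joinker Ts (Suc m)"
    using nf_op_redop[OF V] kerop_nf_op[OF V] .
  have "kerinv_red (joinker Ts (Suc m)) = red ?U"
    by (rule kerinv_red_eq[OF U kerop_U])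
  then show ?thesis
    using syz_Suc_decomposition[OF Ts U kerop_U] syz_Int_svec_span[OF Ts U kerop_U]
    unfolding i by simp
qed

end
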